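(* Let $k$ be a field of characteristic $0$, $L/k$ a field extension, $S\in\mathbf{Fam}_L$ with data $a,b,t_0\in L$, and let $\{\mathcal{T}_\gamma\}$ be the one-parameter family of trisections described in the context. Let $R=(x_R,y_R,t_R)\in\mathcal{E}$ with $t_R\neq t_0$. Then there exists a unique $\gamma\in L(x_R,y_R,t_R)$ such that $R\in\mathcal{T}_\gamma$. In particular, if $R$ is $L$-rational, there is $\gamma\in L$ with $R\in\mathcal{T}_\gamma$.
   Context: $S$ is a del Pezzo surface of degree one in $\mathbb{P}(2,3,1,1)$, coordinates $(X:Y:Z:W)$, given by $Y^2=X^3+F(Z,W)X+G(Z,W)$, $F,G\in k[Z,W]$ homogeneous of degrees $4,6$; $f(t)=F(t,1)$, $g(t)=G(t,1)$; $\mathcal{E}:y^2=x^3+f(t)x+g(t)$ is the rational elliptic surface obtained by blowing up the base point of $|-K_S|$. $S\in\mathbf{Fam}_L$ means there exist $a,b,t_0\in L$ with $t_0\neq0$, $at_0+b\neq0$, $f(t_0)\neq-(at_0+b)^4/3$, such that $t_0$ is a double root of $P(t)=-f(t)^2/4+(at+b)^4f(t)/6+(at+b)^2g(t)+(at+b)^8/108$. Let $Q=((at_0+b)^2/3,\ (at_0+b)^3/6+f(t_0)/(2(at_0+b)),\ t_0)$. For a parameter $\gamma$, $\mathcal{T}_\gamma\subset\mathcal{E}$ is the curve $y=axt+bx+c(\gamma)t^3+d(\gamma)t^2+e(\gamma)t+\gamma$, where $c(\gamma),d(\gamma),e(\gamma)$ are the coefficients, uniquely determined by $\gamma$, for which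 $\mathcal{T}_\gamma$ has a triple point at $Q$. *)

theory Defs
  imports "HOL-Computational_Algebra.Polynomial"
begin

definition is_subfield :: "'a::field set \<Rightarrow> bool" where
  "is_subfield K \<longleftrightarrow> 0 \<in> K \<and> 1 \<in> K \<and>
     (\<forall>x\<in>K. \<forall>y\<in>K. x + y \<in> K \<and> x * y \<in> K) \<and>
     (\<forall>x\<in>K. - x \<in> K) \<and> (\<forall>x\<in>K. x \<noteq> 0 \<longrightarrow> inverse x \<in> K)"

definition field_adjoin :: "'a::field set \<Rightarrow> 'a set \<Rightarrow> 'a set" where
  "field_adjoin K S = \<Inter> {M. is_subfield M \<and> K \<union> S \<subseteq> M}"

definition on_E :: "'a::field poly \<Rightarrow> 'a poly \<Rightarrow> 'a \<Rightarrow> 'a \<Rightarrow> 'a \<Rightarrow> bool" where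
  "on_E f g x y t \<longleftrightarrow> y ^ 2 = x ^ 3 + poly f t * x + poly g t"

definition P_poly :: "'a::field_char_0 poly \<Rightarrow> 'a poly \<Rightarrow> 'a \<Rightarrow> 'a \<Rightarrow> 'a poly" where
  "P_poly f g a b =
     (let u = [:b, a:] in
      smult (- 1 / 4) (f ^ 2) + smult (1 / 6) (u ^ 4 * f) + u ^ 2 * g + smult (1 / 108) (u ^ 8))"

definition Q_x :: "'a::field_char_0 \<Rightarrow> 'a \<Rightarrow> 'a \<Rightarrow> 'a" where
  "Q_x a b t0 = (a * t0 + b) ^ 2 / 3"

definition Q_y :: "'a::field_char_0 poly \<Rightarrow> 'a \<Rightarrow> 'a \<Rightarrow> 'a \<Rightarrow> 'a" where
  "Q_y f a b t0 = (a * t0 + b) ^ 3 / 6 + poly f t0 / (2 * (a * t0 + b))"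

definition tri_cubic :: "'a::field \<Rightarrow> 'a \<Rightarrow> 'a \<Rightarrow> 'a \<Rightarrow> 'a poly" where
  "tri_cubic c d e \<gamma> = [:\<gamma>, e, d, c:]"

text \<open>The curve E \<inter> {y = (at+b)x + p(t)} is (via the graph map) the plane curve H(x,t) = 0 with
  H = ((at+b)x + p(t))^2 - x^3 - f(t) x - g(t); we represent H as a polynomial in x whose
  coefficients are polynomials in t.\<close>

definition tri_H :: "'a::field poly \<Rightarrow> 'a poly \<Rightarrow> 'a \<Rightarrow> 'a \<Rightarrow> 'a poly \<Rightarrow> 'a poly poly" where
  "tri_H f g a b p = (let u = [:b, a:] in [: p ^ 2 - g, smult 2 (u * p) - f, u ^ 2, - 1 :])"

text \<open>Multiplicity at least m at (x0,t0) of the plane curve given by H: after translating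
  (x0,t0) to the origin, every monomial x^i t^j of total degree i + j < m has coefficient 0.\<close>

definition mult_at_least ::
    "nat \<Rightarrow> 'a::field poly poly \<Rightarrow> 'a \<Rightarrow> 'a \<Rightarrow> bool" where
  "mult_at_least m H x0 t0 \<longleftrightarrow>
     (let Hs = map_poly (\<lambda>q. pcompose q [:t0, 1:]) (pcompose H [:[:x0:], 1:])
      in \<forall>i j. i + j < m \<longrightarrow> coeff (coeff Hs i) j = 0)"

definition triple_at_Q ::
    "'a::field_char_0 poly \<Rightarrow> 'a poly \<Rightarrow> 'a \<Rightarrow> 'a \<Rightarrow> 'a \<Rightarrow> 'a \<Rightarrow> 'a \<Rightarrow> 'a \<Rightarrow> 'a \<Rightarrow> bool" where
  "triple_at_Q f g a b t0 c d e \<gamma> \<longleftrightarrow>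
     Q_y f a b t0 = (a * t0 + b) * Q_x a b t0 + poly (tri_cubic c d e \<gamma>) t0 \<and>
     mult_at_least 3 (tri_H f g a b (tri_cubic c d e \<gamma>)) (Q_x a b t0) t0"

definition on_T ::
    "'a::field_char_0 poly \<Rightarrow> 'a poly \<Rightarrow> 'a \<Rightarrow> 'a \<Rightarrow> 'a \<Rightarrow> 'a \<Rightarrow> 'a \<Rightarrow> 'a \<Rightarrow> 'a \<Rightarrow> bool" where
  "on_T f g a b t0 \<gamma> x y t \<longleftrightarrow>
     on_E f g x y t \<and>
     (\<exists>c d e. triple_at_Q f g a b t0 c d e \<gamma> \<and>
        y = a * x * t + b * x + c * t ^ 3 + d * t ^ 2 + e * t + \<gamma>)"

end

theory Submission
  imports Defs
begin

text \<open>Write T_gamma as y = Y(x, t) = (at+b)x + p(t) with the cubic p, and let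
  H = Y^2 - x^3 - f x - g. Given Y(Q_x, t0) = Q_y, four of the six Taylor conditions for a triple
  point of H = 0 at Q hold automatically: the pure x-derivatives vanish by the choice of Q_x and
  Q_y, H vanishes because Q lies on E, which is P(t0) = 0, and the mixed derivative vanishes
  because P'(t0) = 0. The remaining two say that t \<mapsto> Y(Q_x, t) agrees to second order at t0
  with y along the curve x = Q_x of E. So the triple point condition prescribes the 2-jet of p at
  t0, and a cubic with prescribed 2-jet at t0 is determined by its value at any other point tR:
  passing through R fixes p, hence gamma = p(0), as an explicit rational expression in the data
  and the coordinates of R.\<close>

lemma subfield_add: "is_subfield M \<Longrightarrow> x \<in> M \<Longrightarrow> y \<in> M \<Longrightarrow> x + y \<in> M"
  and subfield_mult: "is_subfield M \<Longrightarrow> x \<in> M \<Longrightarrow> y \<in> M \<Longrightarrow> x * y \<in> M"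
  and subfield_uminus: "is_subfield M \<Longrightarrow> x \<in> M \<Longrightarrow> - x \<in> M"
  and subfield_inverse: "is_subfield M \<Longrightarrow> x \<in> M \<Longrightarrow> inverse x \<in> M"
  unfolding is_subfield_def by (auto simp del: inverse_zero) (metis inverse_zero)

lemma subfield_diff: "is_subfield M \<Longrightarrow> x \<in> M \<Longrightarrow> y \<in> M \<Longrightarrow> x - y \<in> M"
  by (metis diff_conv_add_uminus subfield_add subfield_uminus)

lemma subfield_divide: "is_subfield M \<Longrightarrow> x \<in> M \<Longrightarrow> y \<in> M \<Longrightarrow> x / y \<in> M"
  by (metis divide_inverse subfield_mult subfield_inverse)

lemma subfield_power: "is_subfield M \<Longrightarrow> x \<in> M \<Longrightarrow> x ^ n \<in> M"
  by (induction n) (auto simp: is_subfield_def)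

lemma subfield_of_nat: "is_subfield M \<Longrightarrow> of_nat n \<in> M"
  by (induction n) (auto simp: is_subfield_def)

lemma subfield_numeral: "is_subfield M \<Longrightarrow> numeral n \<in> M"
  by (metis of_nat_numeral subfield_of_nat)

lemmas subfield_closed =
  subfield_add subfield_mult subfield_uminus subfield_diff subfield_divide subfield_power
  subfield_numeral

lemma poly_in_subfield:
  assumes "is_subfield M" "\<forall>i. coeff q i \<in> M" "t \<in> M"
  shows "poly q t \<in> M"
  using assms(2)
proof (induction q)
  case 0
  show ?case using assms(1) by (simp add: is_subfield_def)
next
  case (pCons c q)
  have "c \<in> M" "\<forall>i. coeff q i \<in> M"
    using pCons.prems by (metis coeff_pCons_0, metis coeff_pCons_Suc)
  then show ?case using pCons.IH assms(1,3) by (simp add: subfield_closed)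
qed

lemma coeff_pderiv_in_subfield:
  "is_subfield M \<Longrightarrow> \<forall>i. coeff q i \<in> M \<Longrightarrow> \<forall>i. coeff (pderiv q) i \<in> M"
  by (simp add: coeff_pderiv subfield_mult subfield_add subfield_of_nat is_subfield_def)

lemma is_subfield_field_adjoin: "is_subfield (field_adjoin K S)"
  unfolding field_adjoin_def is_subfield_def by auto

lemma field_adjoin_superset: "K \<union> S \<subseteq> field_adjoin K S"
  unfolding field_adjoin_def by auto

lemma field_adjoin_least: "is_subfield M \<Longrightarrow> K \<union> S \<subseteq> M \<Longrightarrow> field_adjoin K S \<subseteq> M"
  unfolding field_adjoin_def by auto

lemma root_and_pderiv_root_if_order_ge_2:
  fixes P :: "'a::field_char_0 poly"
  assumes "P \<noteq> 0" "order t0 P \<ge> 2"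
  shows "poly P t0 = 0" "poly (pderiv P) t0 = 0"
proof -
  obtain R where R: "P = [:-t0, 1:] ^ 2 * R"
    using order_divides assms by (metis dvdE)
  show "poly P t0 = 0" using R by simp
  show "poly (pderiv P) t0 = 0" using R by (simp add: pderiv_mult pderiv_power pderiv_pCons)
qed

lemma taylor_coeff_0: "coeff (pcompose q [:t0, 1:]) 0 = poly q t0"
  by (simp add: poly_0_coeff_0[symmetric] poly_pcompose)

lemma pderiv_pcompose_shift:
  "pderiv (pcompose q [:t0, 1:]) = pcompose (pderiv q) [:t0::'a::field_char_0, 1:]"
  by (simp add: pderiv_pcompose pderiv_pCons)

lemma taylor_coeff_1:
  "coeff (pcompose q [:t0, 1:]) 1 = poly (pderiv q) (t0::'a::field_char_0)"
  by (metis coeff_pderiv of_nat_1 mult_1 One_nat_def pderiv_pcompose_shift taylor_coeff_0)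

lemma taylor_coeff_2:
  "coeff (pcompose q [:t0, 1:]) 2 = poly (pderiv (pderiv q)) (t0::'a::field_char_0) / 2"
proof -
  have "coeff (pderiv (pcompose q [:t0, 1:])) 1 = 2 * coeff (pcompose q [:t0, 1:]) 2"
    by (simp add: coeff_pderiv numeral_2_eq_2)
  then show ?thesis
    using taylor_coeff_1[of "pderiv q" t0] by (simp add: pderiv_pcompose_shift algebra_simps)
qed

lemma coeff_pcompose_cubic_shift:
  fixes A0 A1 A2 A3 x0 :: "'a::comm_ring_1"
  shows "coeff (pcompose [:A0, A1, A2, A3:] [:x0, 1:]) 0 = A0 + x0 * A1 + x0^2 * A2 + x0^3 * A3"
    "coeff (pcompose [:A0, A1, A2, A3:] [:x0, 1:]) 1 = A1 + 2 * x0 * A2 + 3 * x0^2 * A3"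
    "coeff (pcompose [:A0, A1, A2, A3:] [:x0, 1:]) 2 = A2 + 3 * x0 * A3"
  by (simp_all add: pcompose_pCons algebra_simps numeral_2_eq_2 power2_eq_square
      power3_eq_cube mult_pCons_left)

lemma all_degree_less_3_iff:
  "(\<forall>i j. i + j < (3::nat) \<longrightarrow> R i j) \<longleftrightarrow>
     R 0 0 \<and> R 0 1 \<and> R 0 2 \<and> R 1 0 \<and> R 1 1 \<and> R 2 0"
proof
  assume "R 0 0 \<and> R 0 1 \<and> R 0 2 \<and> R 1 0 \<and> R 1 1 \<and> R 2 0"
  moreover have "i + j < 3 \<Longrightarrow> (i, j) \<in> {(0, 0), (0, 1), (0, 2), (1, 0), (1, 1), (2, 0)}"
    for i j :: nat
    by auto
  ultimately show "\<forall>i j. i + j < 3 \<longrightarrow> R i j" by auto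
qed auto

text \<open>With Y = (at+b)x + p(t), so that H = Y^2 - x^3 - f x - g, the six conjuncts are, up to
  constant factors, the Taylor coefficients of H at (x0, t0) of the monomials x^i t^j with
  (i, j) = (0,0), (0,1), (0,2), (1,0), (1,1), (2,0).\<close>

lemma mult_at_least_3_tri_H_iff:
  fixes f g p :: "'a::field_char_0 poly" and a b t0 x0 :: 'a
  defines "u \<equiv> a * t0 + b"
    and "Y0 \<equiv> (a * t0 + b) * x0 + poly p t0"
    and "Y1 \<equiv> a * x0 + poly (pderiv p) t0"
    and "Y2 \<equiv> poly (pderiv (pderiv p)) t0"
  shows "mult_at_least 3 (tri_H f g a b p) x0 t0 \<longleftrightarrow>
    Y0^2 = x0^3 + poly f t0 * x0 + poly g t0 \<and>
    2 * Y0 * Y1 = poly (pderiv f) t0 * x0 + poly (pderiv g) t0 \<and>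
    2 * Y1^2 + 2 * Y0 * Y2 = poly (pderiv (pderiv f)) t0 * x0 + poly (pderiv (pderiv g)) t0 \<and>
    2 * u * Y0 = 3 * x0^2 + poly f t0 \<and>
    2 * a * Y0 + 2 * u * Y1 = poly (pderiv f) t0 \<and>
    u^2 = 3 * x0" (is "_ \<longleftrightarrow> ?jet_conditions")
proof -
  define Hx where "Hx = pcompose (tri_H f g a b p) [:[:x0:], 1:]"
  have "mult_at_least 3 (tri_H f g a b p) x0 t0 \<longleftrightarrow>
      (\<forall>i j. i + j < 3 \<longrightarrow> coeff (pcompose (coeff Hx i) [:t0, 1:]) j = 0)"
    unfolding mult_at_least_def Hx_def Let_def by (simp add: coeff_map_poly)
  also have "\<dots> \<longleftrightarrow> ?jet_conditions"
    unfolding all_degree_less_3_iff Hx_def tri_H_def Let_def coeff_pcompose_cubic_shift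
      taylor_coeff_0 taylor_coeff_1 taylor_coeff_2 u_def Y0_def Y1_def Y2_def
    by (simp add: pderiv_add pderiv_mult pderiv_diff pderiv_pCons pderiv_smult
        power2_eq_square power3_eq_cube algebra_simps eq_neg_iff_add_eq_0)
  finally show ?thesis .
qed

lemma poly_P_poly:
  "poly (P_poly f g a b) t =
     - (poly f t ^ 2) / 4 + (a * t + b) ^ 4 * poly f t / 6 + (a * t + b) ^ 2 * poly g t
     + (a * t + b) ^ 8 / 108"
  unfolding P_poly_def Let_def by (simp add: algebra_simps)

lemma poly_pderiv_P_poly:
  "poly (pderiv (P_poly f g a b)) t =
     - poly f t * poly (pderiv f) t / 2
     + (4 * a * (a * t + b) ^ 3 * poly f t + (a * t + b) ^ 4 * poly (pderiv f) t) / 6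
     + 2 * a * (a * t + b) * poly g t + (a * t + b) ^ 2 * poly (pderiv g) t
     + 8 * a * (a * t + b) ^ 7 / 108"
  unfolding P_poly_def Let_def
  by (simp add: pderiv_add pderiv_diff pderiv_minus pderiv_mult pderiv_smult pderiv_power
      pderiv_pCons algebra_simps)

lemma Q_on_E:
  fixes f g :: "'a::field_char_0 poly"
  assumes u: "a * t0 + b \<noteq> 0" and P: "poly (P_poly f g a b) t0 = 0"
  shows "on_E f g (Q_x a b t0) (Q_y f a b t0) t0"
proof -
  define u where "u = a * t0 + b"
  have u: "u \<noteq> 0" using u unfolding u_def .
  have "u^2 * ((Q_y f a b t0)^2 - (Q_x a b t0)^3 - poly f t0 * Q_x a b t0 - poly g t0)
      = - poly (P_poly f g a b) t0"
    using u unfolding poly_P_poly Q_x_def Q_y_def u_def[symmetric]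
    by (simp add: field_simps power_numeral_reduce)
  then have "(Q_y f a b t0)^2 - (Q_x a b t0)^3 - poly f t0 * Q_x a b t0 - poly g t0 = 0"
    using u P by simp
  then show ?thesis
    unfolding on_E_def by algebra
qed

lemma Q_y_eq:
  fixes f :: "'a::field_char_0 poly"
  assumes "a * t0 + b \<noteq> 0"
  shows "2 * (a * t0 + b) * Q_y f a b t0 = 3 * Q_x a b t0 ^ 2 + poly f t0"
proof -
  define u where "u = a * t0 + b"
  have "u \<noteq> 0" using assms unfolding u_def .
  then show ?thesis
    unfolding Q_x_def Q_y_def u_def[symmetric] by (simp add: field_simps power_numeral_reduce)
qed

lemma Q_y_nonzero:
  fixes f :: "'a::field_char_0 poly"
  assumes u: "a * t0 + b \<noteq> 0" and f: "poly f t0 \<noteq> - ((a * t0 + b) ^ 4 / 3)"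
  shows "Q_y f a b t0 \<noteq> 0"
proof -
  define u where "u = a * t0 + b"
  have u: "u \<noteq> 0" using u unfolding u_def .
  have "u ^ 4 + 3 * poly f t0 \<noteq> 0"
    using f unfolding u_def by (auto simp: field_simps add_eq_0_iff2)
  moreover have "Q_y f a b t0 = (u ^ 4 + 3 * poly f t0) / (6 * u)"
    using u unfolding Q_y_def u_def[symmetric] by (simp add: field_simps power_numeral_reduce)
  ultimately show ?thesis using u by simp
qed

text \<open>The first two derivatives at Q of y along the curve x = Q_x of E, by implicit
  differentiation of y^2 = x^3 + f(t) x + g(t).\<close>

definition Q_dy :: "'a::field_char_0 poly \<Rightarrow> 'a poly \<Rightarrow> 'a \<Rightarrow> 'a \<Rightarrow> 'a \<Rightarrow> 'a" where
  "Q_dy f g a b t0 =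
     (poly (pderiv f) t0 * Q_x a b t0 + poly (pderiv g) t0) / (2 * Q_y f a b t0)"

definition Q_ddy :: "'a::field_char_0 poly \<Rightarrow> 'a poly \<Rightarrow> 'a \<Rightarrow> 'a \<Rightarrow> 'a \<Rightarrow> 'a" where
  "Q_ddy f g a b t0 =
     (poly (pderiv (pderiv f)) t0 * Q_x a b t0 + poly (pderiv (pderiv g)) t0
      - 2 * Q_dy f g a b t0 ^ 2) / (2 * Q_y f a b t0)"

lemma Q_dy_from_double_root:
  fixes f g :: "'a::field_char_0 poly"
  assumes u: "a * t0 + b \<noteq> 0" and f: "poly f t0 \<noteq> - ((a * t0 + b) ^ 4 / 3)"
    and P: "poly (P_poly f g a b) t0 = 0" and P': "poly (pderiv (P_poly f g a b)) t0 = 0"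
  shows "2 * a * Q_y f a b t0 + 2 * (a * t0 + b) * Q_dy f g a b t0 = poly (pderiv f) t0"
proof -
  define u where "u = a * t0 + b"
  define y0 where "y0 = Q_y f a b t0"
  have y0: "y0 \<noteq> 0" using Q_y_nonzero[OF u f] unfolding y0_def .
  have u: "u \<noteq> 0" using u unfolding u_def .
  have f_y0: "poly f t0 = 2 * u * y0 - u^4 / 3"
    using u unfolding y0_def Q_y_def u_def[symmetric]
    by (simp add: field_simps power_numeral_reduce)
  have "(2 * a * y0 + 2 * u * Q_dy f g a b t0 - poly (pderiv f) t0) * (y0 * u)
      = poly (pderiv (P_poly f g a b)) t0 - 2 * a / u * poly (P_poly f g a b) t0"
    using u y0 unfolding poly_P_poly poly_pderiv_P_poly Q_dy_def y0_def[symmetric]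
      Q_x_def u_def[symmetric] f_y0
    by (simp add: field_simps power_numeral_reduce)
  then show ?thesis
    using P P' u y0 unfolding y0_def u_def by simp
qed

lemma triple_at_Q_iff_jet:
  fixes f g :: "'a::field_char_0 poly" and c d e \<gamma> :: 'a
  assumes u: "a * t0 + b \<noteq> 0" and f: "poly f t0 \<noteq> - ((a * t0 + b) ^ 4 / 3)"
    and P: "poly (P_poly f g a b) t0 = 0" and P': "poly (pderiv (P_poly f g a b)) t0 = 0"
  defines "p \<equiv> tri_cubic c d e \<gamma>"
  shows "triple_at_Q f g a b t0 c d e \<gamma> \<longleftrightarrow>
    poly p t0 = Q_y f a b t0 - (a * t0 + b) * Q_x a b t0 \<and>
    poly (pderiv p) t0 = Q_dy f g a b t0 - a * Q_x a b t0 \<and>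
    poly (pderiv (pderiv p)) t0 = Q_ddy f g a b t0"
proof (cases "poly p t0 = Q_y f a b t0 - (a * t0 + b) * Q_x a b t0")
  case False
  then show ?thesis unfolding triple_at_Q_def p_def by auto
next
  case True
  define x0 y0 where "x0 = Q_x a b t0" and "y0 = Q_y f a b t0"
  define Y1 Y2 where "Y1 = a * x0 + poly (pderiv p) t0" and "Y2 = poly (pderiv (pderiv p)) t0"
  have Y0: "(a * t0 + b) * x0 + poly p t0 = y0" using True unfolding x0_def y0_def by simp
  have y0: "y0 \<noteq> 0" using Q_y_nonzero[OF u f] unfolding y0_def .
  have on_E: "y0^2 = x0^3 + poly f t0 * x0 + poly g t0"
    using Q_on_E[OF u P] unfolding on_E_def x0_def y0_def .
  have x0: "(a * t0 + b)^2 = 3 * x0" unfolding x0_def Q_x_def by simp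
  have dx: "2 * (a * t0 + b) * y0 = 3 * x0^2 + poly f t0"
    using Q_y_eq[OF u] unfolding x0_def y0_def .
  have dxdt: "2 * a * y0 + 2 * (a * t0 + b) * Q_dy f g a b t0 = poly (pderiv f) t0"
    using Q_dy_from_double_root[OF u f P P'] unfolding y0_def .
  have dt: "2 * y0 * Y1 = poly (pderiv f) t0 * x0 + poly (pderiv g) t0 \<longleftrightarrow>
      Y1 = Q_dy f g a b t0"
    using y0 unfolding Q_dy_def x0_def y0_def by (auto simp: field_simps)
  have dtdt: "2 * (Q_dy f g a b t0)^2 + 2 * y0 * Y2 =
        poly (pderiv (pderiv f)) t0 * x0 + poly (pderiv (pderiv g)) t0 \<longleftrightarrow>
      Y2 = Q_ddy f g a b t0"
    using y0 unfolding Q_ddy_def x0_def y0_def by (auto simp: field_simps)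
  have "triple_at_Q f g a b t0 c d e \<gamma> \<longleftrightarrow> mult_at_least 3 (tri_H f g a b p) x0 t0"
    using True unfolding triple_at_Q_def p_def x0_def by simp
  also have "\<dots> \<longleftrightarrow> Y1 = Q_dy f g a b t0 \<and> Y2 = Q_ddy f g a b t0"
    unfolding mult_at_least_3_tri_H_iff Y0 Y1_def[symmetric] Y2_def[symmetric]
    using on_E x0 dx dxdt dt dtdt by auto
  also have "\<dots> \<longleftrightarrow> poly (pderiv p) t0 = Q_dy f g a b t0 - a * x0 \<and> Y2 = Q_ddy f g a b t0"
    unfolding Y1_def by (auto simp: algebra_simps)
  finally show ?thesis using True unfolding Y2_def x0_def by simp
qed

lemma poly_tri_cubic: "poly (tri_cubic c d e \<gamma>) t = \<gamma> + e * t + d * t^2 + c * t^3"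
  and poly_pderiv_tri_cubic: "poly (pderiv (tri_cubic c d e \<gamma>)) t = e + 2 * d * t + 3 * c * t^2"
  and poly_pderiv2_tri_cubic: "poly (pderiv (pderiv (tri_cubic c d e \<gamma>))) t = 2 * d + 6 * c * t"
  unfolding tri_cubic_def
  by (simp_all add: pderiv_pCons algebra_simps power2_eq_square power3_eq_cube)

lemma tri_cubic_taylor:
  fixes c d e \<gamma> t0 t :: "'a::field_char_0"
  defines "p \<equiv> tri_cubic c d e \<gamma>"
  shows "poly p t = poly p t0 + poly (pderiv p) t0 * (t - t0)
    + poly (pderiv (pderiv p)) t0 / 2 * (t - t0)^2 + c * (t - t0)^3"
  unfolding p_def poly_tri_cubic poly_pderiv_tri_cubic poly_pderiv2_tri_cubic
  by (simp add: field_simps power2_eq_square power3_eq_cube)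

text \<open>Hermite interpolation: by the Taylor expansion at t0, the value v at t determines the
  leading coefficient of the cubic, and its constant coefficient is its value at 0.\<close>

definition hermite_const_coeff :: "'a::field_char_0 \<Rightarrow> 'a \<Rightarrow> 'a \<Rightarrow> 'a \<Rightarrow> 'a \<Rightarrow> 'a \<Rightarrow> 'a" where
  "hermite_const_coeff t0 J0 J1 J2 t v =
     (let c = (v - J0 - J1 * (t - t0) - J2 / 2 * (t - t0)^2) / (t - t0)^3
      in J0 - J1 * t0 + J2 / 2 * t0^2 - c * t0^3)"

lemma tri_cubic_hermite_iff:
  fixes t0 t :: "'a::field_char_0"
  assumes "t \<noteq> t0"
  shows "(\<exists>c d e. poly (tri_cubic c d e \<gamma>) t0 = J0 \<and> poly (pderiv (tri_cubic c d e \<gamma>)) t0 = J1 \<and>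
            poly (pderiv (pderiv (tri_cubic c d e \<gamma>))) t0 = J2 \<and> poly (tri_cubic c d e \<gamma>) t = v)
    \<longleftrightarrow> \<gamma> = hermite_const_coeff t0 J0 J1 J2 t v"
proof
  assume "\<exists>c d e. poly (tri_cubic c d e \<gamma>) t0 = J0 \<and> poly (pderiv (tri_cubic c d e \<gamma>)) t0 = J1 \<and>
            poly (pderiv (pderiv (tri_cubic c d e \<gamma>))) t0 = J2 \<and> poly (tri_cubic c d e \<gamma>) t = v"
  then obtain c d e where J0: "poly (tri_cubic c d e \<gamma>) t0 = J0"
    and J1: "poly (pderiv (tri_cubic c d e \<gamma>)) t0 = J1"
    and J2: "poly (pderiv (pderiv (tri_cubic c d e \<gamma>))) t0 = J2"
    and v: "poly (tri_cubic c d e \<gamma>) t = v"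
    by blast
  have "v = J0 + J1 * (t - t0) + J2 / 2 * (t - t0)^2 + c * (t - t0)^3"
    using tri_cubic_taylor[of c d e \<gamma> t t0] J0 J1 J2 v by simp
  then have c: "c = (v - J0 - J1 * (t - t0) - J2 / 2 * (t - t0)^2) / (t - t0)^3"
    using assms by (simp add: field_simps)
  have "\<gamma> = poly (tri_cubic c d e \<gamma>) 0" by (simp add: poly_tri_cubic)
  also have "\<dots> = J0 + J1 * (0 - t0) + J2 / 2 * (0 - t0)^2 + c * (0 - t0)^3"
    using tri_cubic_taylor[of c d e \<gamma> 0 t0] J0 J1 J2 by simp
  finally show "\<gamma> = hermite_const_coeff t0 J0 J1 J2 t v"
    unfolding hermite_const_coeff_def Let_def c[symmetric] by (simp add: power_numeral_reduce)
next
  assume \<gamma>: "\<gamma> = hermite_const_coeff t0 J0 J1 J2 t v"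
  define c where "c = (v - J0 - J1 * (t - t0) - J2 / 2 * (t - t0)^2) / (t - t0)^3"
  define d where "d = J2 / 2 - 3 * c * t0"
  define e where "e = J1 - J2 * t0 + 3 * c * t0^2"
  have J0: "poly (tri_cubic c d e \<gamma>) t0 = J0"
    and J1: "poly (pderiv (tri_cubic c d e \<gamma>)) t0 = J1"
    and J2: "poly (pderiv (pderiv (tri_cubic c d e \<gamma>))) t0 = J2"
    using \<gamma> unfolding hermite_const_coeff_def Let_def c_def[symmetric] d_def e_def
      poly_tri_cubic poly_pderiv_tri_cubic poly_pderiv2_tri_cubic
    by (simp_all add: field_simps power2_eq_square power3_eq_cube)
  moreover have "poly (tri_cubic c d e \<gamma>) t = v"
    using tri_cubic_taylor[of c d e \<gamma> t t0] J0 J1 J2 assms unfolding c_def by simp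
  ultimately show "\<exists>c d e. poly (tri_cubic c d e \<gamma>) t0 = J0 \<and>
      poly (pderiv (tri_cubic c d e \<gamma>)) t0 = J1 \<and>
      poly (pderiv (pderiv (tri_cubic c d e \<gamma>))) t0 = J2 \<and> poly (tri_cubic c d e \<gamma>) t = v"
    by blast
qed

lemma on_T_iff_hermite:
  fixes f g :: "'a::field_char_0 poly"
  assumes u: "a * t0 + b \<noteq> 0" and f: "poly f t0 \<noteq> - ((a * t0 + b) ^ 4 / 3)"
    and P: "poly (P_poly f g a b) t0 = 0" and P': "poly (pderiv (P_poly f g a b)) t0 = 0"
    and R: "on_E f g x y t" and t: "t \<noteq> t0"
  shows "on_T f g a b t0 \<gamma> x y t \<longleftrightarrow>
    \<gamma> = hermite_const_coeff t0 (Q_y f a b t0 - (a * t0 + b) * Q_x a b t0)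
      (Q_dy f g a b t0 - a * Q_x a b t0) (Q_ddy f g a b t0) t (y - (a * t + b) * x)"
proof -
  have through_R: "y = a * x * t + b * x + c * t^3 + d * t^2 + e * t + \<gamma> \<longleftrightarrow>
      poly (tri_cubic c d e \<gamma>) t = y - (a * t + b) * x" for c d e
    by (auto simp: poly_tri_cubic algebra_simps)
  show ?thesis
    unfolding on_T_def through_R triple_at_Q_iff_jet[OF u f P P']
      tri_cubic_hermite_iff[OF t, symmetric]
    using R by simp
qed

lemma Q_data_in_subfield:
  assumes M: "is_subfield M"
    and f: "\<forall>i. coeff f i \<in> M" and g: "\<forall>i. coeff g i \<in> M"
    and "a \<in> M" "b \<in> M" "t0 \<in> M"
  shows "Q_x a b t0 \<in> M" "Q_y f a b t0 \<in> M" "Q_dy f g a b t0 \<in> M" "Q_ddy f g a b t0 \<in> M"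
proof -
  have derivs: "poly f t0 \<in> M" "poly (pderiv f) t0 \<in> M" "poly (pderiv (pderiv f)) t0 \<in> M"
    "poly g t0 \<in> M" "poly (pderiv g) t0 \<in> M" "poly (pderiv (pderiv g)) t0 \<in> M"
    using f g \<open>t0 \<in> M\<close> by (simp_all add: poly_in_subfield coeff_pderiv_in_subfield M)
  note closed = subfield_closed[OF M]
  show x0: "Q_x a b t0 \<in> M"
    unfolding Q_x_def using assms by (intro closed)
  show y0: "Q_y f a b t0 \<in> M"
    unfolding Q_y_def using assms derivs by (intro closed)
  show dy: "Q_dy f g a b t0 \<in> M"
    unfolding Q_dy_def using x0 y0 derivs by (intro closed)
  show "Q_ddy f g a b t0 \<in> M"
    unfolding Q_ddy_def using x0 y0 dy derivs by (intro closed)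
qed

lemma hermite_const_coeff_in_subfield:
  assumes M: "is_subfield M" and "t0 \<in> M" "J0 \<in> M" "J1 \<in> M" "J2 \<in> M" "t \<in> M" "v \<in> M"
  shows "hermite_const_coeff t0 J0 J1 J2 t v \<in> M"
  unfolding hermite_const_coeff_def Let_def using assms by (intro subfield_closed[OF M])

theorem proposition3p7:
  fixes k L :: "'a::field_char_0 set"
    and f g :: "'a poly"
    and a b t0 xR yR tR :: 'a
  assumes "is_subfield k" and "is_subfield L" and "k \<subseteq> L"
    and "\<forall>i. coeff f i \<in> k" and "\<forall>i. coeff g i \<in> k"
    and "degree f \<le> 4" and "degree g \<le> 6"
    and "a \<in> L" and "b \<in> L" and "t0 \<in> L"
    and "t0 \<noteq> 0" and "a * t0 + b \<noteq> 0"
    and "poly f t0 \<noteq> - ((a * t0 + b) ^ 4 / 3)"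
    and "P_poly f g a b \<noteq> 0" and "order t0 (P_poly f g a b) \<ge> 2"
    and "on_E f g xR yR tR" and "tR \<noteq> t0"
  shows "(\<exists>\<gamma>\<in>field_adjoin L {xR, yR, tR}. on_T f g a b t0 \<gamma> xR yR tR \<and>
            (\<forall>\<gamma>'\<in>field_adjoin L {xR, yR, tR}. on_T f g a b t0 \<gamma>' xR yR tR \<longrightarrow> \<gamma>' = \<gamma>))
       \<and> (xR \<in> L \<and> yR \<in> L \<and> tR \<in> L \<longrightarrow> (\<exists>\<gamma>\<in>L. on_T f g a b t0 \<gamma> xR yR tR))"
proof -
  have P: "poly (P_poly f g a b) t0 = 0" and P': "poly (pderiv (P_poly f g a b)) t0 = 0"
    using root_and_pderiv_root_if_order_ge_2 assms(14,15) by blast+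
  define M where "M = field_adjoin L {xR, yR, tR}"
  define \<Gamma> where "\<Gamma> = hermite_const_coeff t0 (Q_y f a b t0 - (a * t0 + b) * Q_x a b t0)
    (Q_dy f g a b t0 - a * Q_x a b t0) (Q_ddy f g a b t0) tR (yR - (a * tR + b) * xR)"
  have on_T_R: "on_T f g a b t0 \<gamma> xR yR tR \<longleftrightarrow> \<gamma> = \<Gamma>" for \<gamma>
    unfolding \<Gamma>_def using on_T_iff_hermite[OF assms(12,13) P P' assms(16,17)] .
  have M: "is_subfield M" and LM: "L \<subseteq> M" and R: "xR \<in> M" "yR \<in> M" "tR \<in> M"
    using is_subfield_field_adjoin field_adjoin_superset[of L "{xR, yR, tR}"]
    unfolding M_def by auto
  have data: "\<forall>i. coeff f i \<in> M" "\<forall>i. coeff g i \<in> M" "a \<in> M" "b \<in> M" "t0 \<in> M"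
    using assms(3-5,8-10) LM by auto
  have "\<Gamma> \<in> M"
    unfolding \<Gamma>_def using M R data Q_data_in_subfield[OF M data]
    by (intro hermite_const_coeff_in_subfield subfield_closed) auto
  moreover have "M = L" if "xR \<in> L \<and> yR \<in> L \<and> tR \<in> L"
    using field_adjoin_least[OF assms(2), of L "{xR, yR, tR}"] that LM unfolding M_def by auto
  ultimately show ?thesis using on_T_R unfolding M_def by blast
qed

end
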